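(* Let $\bar N$ be an $n$-dimensional Riemannian manifold and consider the product Riemannian manifold $\bar N\times\mathbb{R}^s$, $s>1$, with the product metric. Then every compact subset $K\subset\bar N\times\mathbb{R}^s$ contains no non-zero $(n+k)$-varifold with null first variation relative to $\bar N\times\mathbb{R}^s$, for every $k=1,\dots,s-1$.
   Context: Let $(Z,h)$ be a Riemannian manifold of dimension $z$, isometrically embedded in some Euclidean space $\mathbb{R}^L$, and $K\subset Z$. For $1\le j\le z$, a $j$-varifold in $K$ is a Radon measure $V$ on $G_j(K)=\{(x,P):x\in K,\ P \text{ a } j\text{-dimensional linear subspace of } T_xZ\}$ (planes identified with their orthogonal projection matrices in $\mathbb{R}^L$). $V$ has null first variation relative to $Z$ (is stationary in $Z$) if $\int_{G_j(K)}\operatorname{div}_PX(x)\,dV(x,P)=0$ for every compactly supported $C^1$ vector field $X$ on $Z$ tangent to $Z$, where $\operatorname{div}_PX=\sum_{i,l}P_{il}\partial_lX^i$ (with $X$ extended to a neighborhood in $\mathbb{R}^L$). *)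

theory Defs
  imports "HOL-Analysis.Analysis" "HOL-Probability.Probability"
begin

fun ck_on :: "nat \<Rightarrow> 'a::euclidean_space set \<Rightarrow> ('a \<Rightarrow> 'b::real_normed_vector) \<Rightarrow> bool" where
  "ck_on 0 S f = continuous_on S f"
| "ck_on (Suc k) S f =
     (f differentiable_on S \<and> (\<forall>v. ck_on k S (\<lambda>x. frechet_derivative f (at x) v)))"

definition smooth_on :: "'a::euclidean_space set \<Rightarrow> ('a \<Rightarrow> 'b::real_normed_vector) \<Rightarrow> bool" where
  "smooth_on S f \<longleftrightarrow> (\<forall>k. ck_on k S f)"

definition smooth_diffeo :: "'a::euclidean_space set \<Rightarrow> 'a set \<Rightarrow> ('a \<Rightarrow> 'a) \<Rightarrow> ('a \<Rightarrow> 'a) \<Rightarrow> bool" where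
  "smooth_diffeo U V \<phi> \<psi> \<longleftrightarrow> open U \<and> open V \<and> smooth_on U \<phi> \<and> smooth_on V \<psi> \<and>
     \<phi> ` U = V \<and> (\<forall>x\<in>U. \<psi> (\<phi> x) = x) \<and> (\<forall>y\<in>V. \<phi> (\<psi> y) = y)"

text \<open>M is an n-dimensional smooth embedded submanifold of the Euclidean space 'a
  (with the induced Riemannian metric): locally straightened by a diffeomorphism
  of the ambient space onto an n-dimensional linear subspace.\<close>
definition smooth_submanifold :: "nat \<Rightarrow> 'a::euclidean_space set \<Rightarrow> bool" where
  "smooth_submanifold n M \<longleftrightarrow>
     (\<forall>p\<in>M. \<exists>U V \<phi> \<psi> E. p \<in> U \<and> smooth_diffeo U V \<phi> \<psi> \<and> subspace E \<and> dim E = n \<and>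
        \<phi> ` (M \<inter> U) = V \<inter> E)"

definition tangent_space :: "'a::euclidean_space set \<Rightarrow> 'a \<Rightarrow> 'a set" where
  "tangent_space Z x = {v. \<exists>\<gamma>. (\<forall>t. \<gamma> t \<in> Z) \<and> \<gamma> 0 = x \<and> (\<gamma> has_vector_derivative v) (at 0)}"

definition is_plane :: "'a::euclidean_space set \<Rightarrow> nat \<Rightarrow> 'a \<Rightarrow> ('a \<Rightarrow>\<^sub>L 'a) \<Rightarrow> bool" where
  "is_plane Z j x P \<longleftrightarrow> (\<exists>S. subspace S \<and> dim S = j \<and> S \<subseteq> tangent_space Z x \<and>
      (\<forall>v. blinfun_apply P v \<in> S \<and> (\<forall>w\<in>S. (v - blinfun_apply P v) \<bullet> w = 0)))"

definition grassmann_bundle :: "'a::euclidean_space set \<Rightarrow> nat \<Rightarrow> 'a set \<Rightarrow> ('a \<times> ('a \<Rightarrow>\<^sub>L 'a)) set" where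
  "grassmann_bundle Z j K = {(x, P). x \<in> K \<and> is_plane Z j x P}"

text \<open>A j-varifold in K: a Radon measure on G_j(K), i.e. (G_j(K) being compact for compact K)
  a finite Borel measure concentrated on G_j(K).\<close>
definition varifold :: "'a::euclidean_space set \<Rightarrow> nat \<Rightarrow> 'a set \<Rightarrow> ('a \<times> ('a \<Rightarrow>\<^sub>L 'a)) measure \<Rightarrow> bool" where
  "varifold Z j K V \<longleftrightarrow> sets V = sets borel \<and> emeasure V (space V) < \<infinity> \<and>
      (AE xP in V. xP \<in> grassmann_bundle Z j K)"

definition div_plane :: "('a::euclidean_space \<Rightarrow>\<^sub>L 'a) \<Rightarrow> ('a \<Rightarrow>\<^sub>L 'a) \<Rightarrow> real" where
  "div_plane P DX = (\<Sum>b\<in>Basis. blinfun_apply P b \<bullet> blinfun_apply DX b)"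

text \<open>Admissible test fields: C^1 vector fields X (extended to the ambient space), tangent to Z,
  with compact support in Z.\<close>
definition tangent_test_field :: "'a::euclidean_space set \<Rightarrow> ('a \<Rightarrow> 'a) \<Rightarrow> ('a \<Rightarrow> ('a \<Rightarrow>\<^sub>L 'a)) \<Rightarrow> bool" where
  "tangent_test_field Z X DX \<longleftrightarrow>
     (\<forall>x. (X has_derivative blinfun_apply (DX x)) (at x)) \<and> continuous_on UNIV DX \<and>
     (\<forall>x\<in>Z. X x \<in> tangent_space Z x) \<and>
     compact (closure {x\<in>Z. X x \<noteq> 0}) \<and> closure {x\<in>Z. X x \<noteq> 0} \<subseteq> Z"

definition stationary :: "'a::euclidean_space set \<Rightarrow> ('a \<times> ('a \<Rightarrow>\<^sub>L 'a)) measure \<Rightarrow> bool" where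
  "stationary Z V \<longleftrightarrow> (\<forall>X DX. tangent_test_field Z X DX \<longrightarrow>
      (\<integral>xP. div_plane (snd xP) (DX (fst xP)) \<partial>V) = 0)"

end

theory Submission
  imports Defs
begin

text \<open>
  Write \<open>Z = N \<times> \<real>\<^sup>s\<close> and let \<open>V\<close> be a stationary \<open>(n+k)\<close>-varifold in
  the compact set \<open>K \<subseteq> Z\<close>.  We test stationarity with the "vertical position" field
  \<open>X(x,y) = \<theta>(x,y) \<cdot> (0, y)\<close>, where \<open>\<theta>\<close> is a \<open>C\<^sup>1\<close> cut-off equal to \<open>1\<close> near \<open>K\<close> with compact
  support in \<open>Z\<close>.  On \<open>K\<close> the derivative of \<open>X\<close> is the projection \<open>(u,v) \<mapsto> (0,v)\<close>, so
  \<open>div\<^sub>P X\<close> is the vertical trace \<open>\<Sum>\<^sub>e \<langle>P(0,e),(0,e)\<rangle>\<close> of the plane \<open>P\<close>.  A plane of dimension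
  \<open>n + k > n\<close> tangent to \<open>Z\<close> must contain a non-zero vertical vector (its horizontal
  projection lands in \<open>T N\<close>, of dimension \<open>\<le> n\<close>), hence its vertical trace is positive.
  A finite measure integrating an a.e. positive bounded continuous function to \<open>0\<close> vanishes.
  The argument only uses \<open>k \<ge> 1\<close>.
\<close>

text \<open>It is \<open>C\<^sup>1\<close>, which is all the regularity the test fields need.\<close>
definition smoothstep :: "real \<Rightarrow> real" where
  "smoothstep t = (if t \<le> 0 then 0 else if 1 \<le> t then 1 else 3*t^2 - 2*t^3)"

definition smoothstep' :: "real \<Rightarrow> real" where
  "smoothstep' t = (if t \<le> 0 then 0 else if 1 \<le> t then 0 else 6*t - 6*t^2)"

lemma has_field_derivative_from_one_sided:
  fixes x :: real
  assumes "(f has_field_derivative D) (at x within {..x})"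
    and "(f has_field_derivative D) (at x within {x..})"
  shows "(f has_field_derivative D) (at x)"
proof -
  have "{..x} \<union> {x..} = UNIV" by auto
  then show ?thesis
    using assms Lim_within_Un[of _ D x "{..x}" "{x..}"] unfolding has_field_derivative_iff by simp
qed

lemma cubic_step_deriv:
  "((\<lambda>t::real. 3*t^2 - 2*t^3) has_field_derivative (6*t - 6*t^2)) (at t within S)"
  by (auto intro!: derivative_eq_intros simp: power2_eq_square power3_eq_cube field_simps)

lemma smoothstep_deriv: "(smoothstep has_field_derivative smoothstep' t) (at t)"
proof -
  consider "t < 0" | "t = 0" | "0 < t \<and> t < 1" | "t = 1" | "1 < t" by linarith
  then show ?thesis
  proof cases
    case 1
    then have d0: "smoothstep' t = 0" by (simp add: smoothstep'_def)
    show ?thesis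
      unfolding d0
      by (rule has_field_derivative_transform_within_open[OF DERIV_const, where S="{..<0}"])
         (use 1 in \<open>auto simp: smoothstep_def\<close>)
  next
    case 2
    then have d0: "smoothstep' t = 0" and d1: "smoothstep' t = 6*t - 6*t^2"
      by (simp_all add: smoothstep'_def)
    show ?thesis
    proof (rule has_field_derivative_from_one_sided)
      show "(smoothstep has_field_derivative smoothstep' t) (at t within {..t})"
        unfolding d0
        by (rule has_field_derivative_transform_within[OF DERIV_const, where d=1])
           (use 2 in \<open>auto simp: smoothstep_def\<close>)
      show "(smoothstep has_field_derivative smoothstep' t) (at t within {t..})"
        unfolding d1
        by (rule has_field_derivative_transform_within[OF cubic_step_deriv, where d=1])
           (use 2 in \<open>auto simp: smoothstep_def dist_real_def\<close>)
    qed
  next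
    case 3
    then have d1: "smoothstep' t = 6*t - 6*t^2" by (simp add: smoothstep'_def)
    show ?thesis
      unfolding d1
      by (rule has_field_derivative_transform_within_open[OF cubic_step_deriv, where S="{0<..<1}"])
         (use 3 in \<open>auto simp: smoothstep_def\<close>)
  next
    case 4
    then have d0: "smoothstep' t = 0" and d1: "smoothstep' t = 6*t - 6*t^2"
      by (simp_all add: smoothstep'_def)
    show ?thesis
    proof (rule has_field_derivative_from_one_sided)
      show "(smoothstep has_field_derivative smoothstep' t) (at t within {..t})"
        unfolding d1
        by (rule has_field_derivative_transform_within[OF cubic_step_deriv, where d=1])
           (use 4 in \<open>auto simp: smoothstep_def dist_real_def\<close>)
      show "(smoothstep has_field_derivative smoothstep' t) (at t within {t..})"
        unfolding d0
        by (rule has_field_derivative_transform_within[OF DERIV_const, where d=1])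
           (use 4 in \<open>auto simp: smoothstep_def\<close>)
    qed
  next
    case 5
    then have d0: "smoothstep' t = 0" by (simp add: smoothstep'_def)
    show ?thesis
      unfolding d0
      by (rule has_field_derivative_transform_within_open[OF DERIV_const, where S="{1<..}"])
         (use 5 in \<open>auto simp: smoothstep_def\<close>)
  qed
qed

lemma smoothstep_chain [derivative_intros]:
  "(g has_derivative g') (at x within s) \<Longrightarrow>
   ((\<lambda>x. smoothstep (g x)) has_derivative (\<lambda>v. g' v * smoothstep' (g x))) (at x within s)"
  by (rule DERIV_compose_FDERIV[OF smoothstep_deriv])

text \<open>On \<open>[0,1]\<close> the derivative is \<open>6t - 6t\<^sup>2\<close>; clamping to \<open>[0,1]\<close> shows it is continuous.\<close>
lemma continuous_smoothstep': "continuous_on UNIV smoothstep'"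
proof -
  have clamp: "smoothstep' = (\<lambda>t. 6 * max 0 (min 1 t) - 6 * (max 0 (min 1 t))^2)"
    by (auto simp: smoothstep'_def fun_eq_iff max_def min_def)
  show ?thesis by (subst clamp) (intro continuous_intros)
qed

lemma continuous_on_smoothstep' [continuous_intros]:
  "continuous_on S f \<Longrightarrow> continuous_on S (\<lambda>x. smoothstep' (f x))"
  using continuous_on_compose2[OF continuous_smoothstep'] by blast

lemma smoothstep_nonneg: "0 \<le> smoothstep t"
proof -
  have "0 \<le> t \<Longrightarrow> t \<le> 1 \<Longrightarrow> 0 \<le> t^2 * (3 - 2*t)" by simp
  then show ?thesis by (auto simp: smoothstep_def power2_eq_square power3_eq_cube algebra_simps)
qed

lemma smoothstep_le_0: "t \<le> 0 \<Longrightarrow> smoothstep t = 0"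
  and smoothstep_ge_1: "1 \<le> t \<Longrightarrow> smoothstep t = 1"
  and smoothstep'_ge_1: "1 \<le> t \<Longrightarrow> smoothstep' t = 0"
  by (simp_all add: smoothstep_def smoothstep'_def)

section \<open>Consequences of the chart definition of a submanifold\<close>

lemma submanifold_chart:
  fixes N :: "'a::euclidean_space set"
  assumes "smooth_submanifold n N" "p \<in> N"
  obtains U \<phi> E where "open U" "p \<in> U" "subspace E" "dim E = n"
    "\<And>x. x \<in> U \<Longrightarrow> (\<phi>::'a \<Rightarrow> 'a) differentiable (at x)"
    "\<And>x. x \<in> U \<Longrightarrow> x \<in> N \<longleftrightarrow> \<phi> x \<in> E"
    "\<And>D. (\<phi> has_derivative D) (at p) \<Longrightarrow> inj D"
proof -
  obtain U V \<phi> \<psi> E where pU: "p \<in> U" and sd: "smooth_diffeo U V \<phi> \<psi>"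
    and E: "subspace E" "dim E = n" and im: "\<phi> ` (N \<inter> U) = V \<inter> E"
    using assms unfolding smooth_submanifold_def by meson
  have oU: "open U" and oV: "open V" and sU: "smooth_on U \<phi>" and sV: "smooth_on V \<psi>"
    and UV: "\<phi> ` U = V" and inv: "\<And>x. x \<in> U \<Longrightarrow> \<psi> (\<phi> x) = x"
    using sd unfolding smooth_diffeo_def by auto
  have "\<phi> differentiable_on U" "\<psi> differentiable_on V"
    using sU sV ck_on.simps(2)[of 0] unfolding smooth_on_def by blast+
  then have d\<phi>: "\<phi> differentiable (at x)" if "x \<in> U" for x
    using oU that by (simp add: differentiable_on_eq_differentiable_at)
  have d\<psi>: "\<psi> differentiable (at y)" if "y \<in> V" for y
    using \<open>\<psi> differentiable_on V\<close> oV that by (simp add: differentiable_on_eq_differentiable_at)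
  have mem: "x \<in> N \<longleftrightarrow> \<phi> x \<in> E" if "x \<in> U" for x
  proof
    assume "\<phi> x \<in> E"
    then have "\<phi> x \<in> \<phi> ` (N \<inter> U)" using im UV that by blast
    then obtain x' where "x' \<in> N \<inter> U" "\<phi> x' = \<phi> x" by auto
    then show "x \<in> N" using inv[of x] inv[of x'] that by auto
  qed (use im that in blast)
  text \<open>The chain rule applied to \<open>\<psi> \<circ> \<phi> = id\<close> exhibits a left inverse of \<open>D\<close>.\<close>
  have injD: "inj D" if D: "(\<phi> has_derivative D) (at p)" for D
  proof -
    obtain D2 where D2: "(\<psi> has_derivative D2) (at (\<phi> p))"
      using d\<psi>[of "\<phi> p"] UV pU unfolding differentiable_def by blast
    have "((\<psi> \<circ> \<phi>) has_derivative id) (at p)"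
      by (rule has_derivative_transform_within_open[OF has_derivative_id oU pU]) (simp add: inv)
    then have "D2 \<circ> D = id"
      using has_derivative_unique diff_chain_at[OF D D2] by blast
    then show "inj D" by (metis inj_on_id inj_on_imageI2)
  qed
  show ?thesis by (rule that[OF oU pU E d\<phi> mem injD])
qed

text \<open>A submanifold is locally closed; this is what makes the cut-off supports compact.\<close>
lemma submanifold_locally_closed:
  fixes N :: "'a::euclidean_space set"
  assumes "smooth_submanifold n N" "p \<in> N"
  shows "\<exists>r>0. closed (N \<inter> cball p r)"
proof -
  obtain U E and \<phi> :: "'a \<Rightarrow> 'a" where "open U" "p \<in> U" and E: "subspace E"
    and d: "\<And>x. x \<in> U \<Longrightarrow> \<phi> differentiable (at x)"
    and mem: "\<And>x. x \<in> U \<Longrightarrow> x \<in> N \<longleftrightarrow> \<phi> x \<in> E"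
    using submanifold_chart[OF assms] by metis
  then obtain r where r: "r > 0" "cball p r \<subseteq> U" using open_contains_cball by blast
  have "continuous_on (cball p r) \<phi>"
    using d r(2) by (meson continuous_at_imp_continuous_on differentiable_imp_continuous_within subsetD)
  then have "closed (cball p r \<inter> \<phi> -` E)"
    using continuous_closed_preimage closed_subspace E closed_cball by blast
  moreover have "cball p r \<inter> \<phi> -` E = N \<inter> cball p r" using mem r(2) by auto
  ultimately show ?thesis using r(1) by auto
qed

text \<open>A map sending \<open>N\<close> (locally near \<open>p\<close>) into a subspace \<open>E\<close> has a derivative at \<open>p\<close>
  sending every tangent vector of \<open>N\<close> at \<open>p\<close> into \<open>E\<close>: differentiate \<open>\<langle>w, \<phi>(\<gamma> t)\<rangle> = 0\<close>
  for \<open>w \<perp> E\<close>.\<close>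
lemma derivative_maps_tangent_into_subspace:
  fixes \<phi> :: "'a::euclidean_space \<Rightarrow> 'b::euclidean_space"
  assumes "open U" "p \<in> U" "subspace E" and into: "\<And>x. x \<in> U \<Longrightarrow> x \<in> N \<Longrightarrow> \<phi> x \<in> E"
    and D: "(\<phi> has_derivative D) (at p)" and v: "v \<in> tangent_space N p"
  shows "D v \<in> E"
proof -
  obtain \<gamma> where g: "\<And>t. \<gamma> t \<in> N" "\<gamma> 0 = p" and gd: "(\<gamma> has_vector_derivative v) (at 0)"
    using v unfolding tangent_space_def by blast
  have "w \<bullet> D v = 0" if w: "w \<in> E\<^sup>\<bottom>" for w
  proof -
    obtain S where S: "open S" "0 \<in> S" "\<And>t. t \<in> S \<Longrightarrow> \<gamma> t \<in> U"
      using has_vector_derivative_continuous[OF gd] assms(1,2) g(2)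
      unfolding continuous_at_open by metis
    have const: "w \<bullet> \<phi> (\<gamma> t) = 0" if "t \<in> S" for t
      using w into[OF S(3)[OF that] g(1)] unfolding orthogonal_comp_def orthogonal_def
      by (auto simp: inner_commute)
    have "((\<lambda>t. w \<bullet> \<phi> (\<gamma> t)) has_derivative (\<lambda>t. w \<bullet> D (t *\<^sub>R v))) (at 0)"
      using diff_chain_at[OF gd[unfolded has_vector_derivative_def], of \<phi> D] D g(2)
      by (auto intro!: derivative_eq_intros simp: o_def)
    moreover have "((\<lambda>t. w \<bullet> \<phi> (\<gamma> t)) has_derivative (\<lambda>t. 0)) (at 0)"
      by (rule has_derivative_transform_within_open[OF has_derivative_const S(1) S(2)])
         (simp add: const)
    ultimately have "(\<lambda>t. w \<bullet> D (t *\<^sub>R v)) = (\<lambda>t. 0)" using has_derivative_unique by blast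
    then show "w \<bullet> D v = 0" by (metis scaleR_one)
  qed
  then have "D v \<in> E\<^sup>\<bottom>\<^sup>\<bottom>"
    unfolding orthogonal_comp_def[of "E\<^sup>\<bottom>"] orthogonal_def by (simp add: inner_commute)
  then show ?thesis using orthogonal_comp_self[OF assms(3)] by simp
qed

text \<open>Tangent vectors of an \<open>n\<close>-dimensional submanifold lie in a subspace of dimension \<open>\<le> n\<close>,
  namely the preimage of the chart's model subspace under the (injective) chart derivative.\<close>
lemma submanifold_tangent_space_dim:
  fixes N :: "'a::euclidean_space set"
  assumes "smooth_submanifold n N" "p \<in> N"
  obtains T where "subspace T" "dim T \<le> n" "tangent_space N p \<subseteq> T"
proof -
  obtain U E and \<phi> :: "'a \<Rightarrow> 'a" where U: "open U" "p \<in> U" and E: "subspace E" "dim E = n"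
    and d: "\<And>x. x \<in> U \<Longrightarrow> \<phi> differentiable (at x)"
    and mem: "\<And>x. x \<in> U \<Longrightarrow> x \<in> N \<longleftrightarrow> \<phi> x \<in> E"
    and injD: "\<And>D. (\<phi> has_derivative D) (at p) \<Longrightarrow> inj D"
    using submanifold_chart[OF assms] by metis
  obtain D where D: "(\<phi> has_derivative D) (at p)" using d U unfolding differentiable_def by blast
  have lin: "linear D" using D has_derivative_linear by blast
  define T where "T = D -` E"
  have "subspace T" unfolding T_def using E lin linear_subspace_vimage by blast
  moreover have "dim T \<le> n"
  proof -
    have "dim (D ` T) = dim T" using dim_image_eq lin injD[OF D] inj_on_subset by blast
    moreover have "D ` T \<subseteq> E" unfolding T_def by auto
    ultimately show ?thesis using dim_subset[of "D ` T" E] E(2) by simp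
  qed
  moreover have "tangent_space N p \<subseteq> T"
    using derivative_maps_tangent_into_subspace[OF U E(1) _ D] mem unfolding T_def by blast
  ultimately show ?thesis using that by blast
qed

section \<open>\<open>C\<^sup>1\<close> cut-off functions around compact sets\<close>

text \<open>A \<open>C\<^sup>1\<close> bump centred at \<open>q\<close>: equal to \<open>1\<close> on \<open>cball q \<rho>\<close> and vanishing outside
  \<open>ball q (2\<rho>)\<close>, obtained by feeding a quadratic in \<open>|z - q|\<close> to the smooth step.\<close>
definition bump_arg :: "'b::real_inner \<Rightarrow> real \<Rightarrow> 'b \<Rightarrow> real" where
  "bump_arg q \<rho> z = (4 * \<rho>^2 - (z - q) \<bullet> (z - q)) / (3 * \<rho>^2)"

definition bump :: "'b::real_inner \<Rightarrow> real \<Rightarrow> 'b \<Rightarrow> real" where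
  "bump q \<rho> z = smoothstep (bump_arg q \<rho> z)"

definition bump_deriv :: "'b::real_inner \<Rightarrow> real \<Rightarrow> 'b \<Rightarrow> 'b \<Rightarrow> real" where
  "bump_deriv q \<rho> z v = - (2 * ((z - q) \<bullet> v)) / (3 * \<rho>^2) * smoothstep' (bump_arg q \<rho> z)"

lemma bump_has_derivative: "(bump q \<rho> has_derivative bump_deriv q \<rho> z) (at z)"
proof -
  have "((\<lambda>z. 4 * \<rho>^2 - (z - q) \<bullet> (z - q)) has_derivative (\<lambda>v. - (2 * ((z - q) \<bullet> v)))) (at z)"
    by (auto intro!: derivative_eq_intros simp: inner_commute)
  from bounded_linear.has_derivative[OF bounded_linear_divide this]
  have "(bump_arg q \<rho> has_derivative (\<lambda>v. - (2 * ((z - q) \<bullet> v)) / (3 * \<rho>^2))) (at z)"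
    unfolding bump_arg_def[abs_def] .
  from smoothstep_chain[OF this] show ?thesis
    unfolding bump_def[abs_def] bump_deriv_def[abs_def] .
qed

lemma continuous_bump_deriv: "continuous_on UNIV (\<lambda>z. bump_deriv q \<rho> z v)"
proof (cases "\<rho> = 0")
  case False
  then show ?thesis unfolding bump_deriv_def bump_arg_def by (intro continuous_intros) auto
qed (simp add: bump_deriv_def)

lemma bump_eq_1:
  assumes "\<rho> > 0" "z \<in> cball q \<rho>"
  shows "bump q \<rho> z = 1"
proof -
  have "(z - q) \<bullet> (z - q) \<le> \<rho>^2"
    using assms by (simp add: dist_norm norm_minus_commute power_mono flip: power2_norm_eq_inner)
  then have "1 \<le> bump_arg q \<rho> z" using assms(1) by (simp add: bump_arg_def field_simps)
  then show ?thesis by (simp add: bump_def smoothstep_ge_1)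
qed

lemma bump_nonzero_imp_ball:
  assumes "\<rho> > 0" "bump q \<rho> z \<noteq> 0"
  shows "z \<in> ball q (2 * \<rho>)"
proof -
  have "0 < bump_arg q \<rho> z" using assms(2) smoothstep_le_0 unfolding bump_def by (metis not_le)
  then have "(norm (z - q))^2 < (2 * \<rho>)^2"
    using assms(1) by (simp add: bump_arg_def power2_norm_eq_inner field_simps)
  from power_less_imp_less_base[OF this] show ?thesis
    using assms(1) by (simp add: dist_norm norm_minus_commute)
qed

definition cover_cutoff :: "'b::real_inner set \<Rightarrow> ('b \<Rightarrow> real) \<Rightarrow> 'b \<Rightarrow> real" where
  "cover_cutoff Q \<rho> z = smoothstep (\<Sum>q\<in>Q. bump q (\<rho> q) z)"

definition cover_cutoff_deriv :: "'b::real_inner set \<Rightarrow> ('b \<Rightarrow> real) \<Rightarrow> 'b \<Rightarrow> 'b \<Rightarrow> real" where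
  "cover_cutoff_deriv Q \<rho> z v =
     (\<Sum>q\<in>Q. bump_deriv q (\<rho> q) z v) * smoothstep' (\<Sum>q\<in>Q. bump q (\<rho> q) z)"

lemma cover_cutoff_has_derivative:
  "(cover_cutoff Q \<rho> has_derivative cover_cutoff_deriv Q \<rho> z) (at z)"
  unfolding cover_cutoff_def[abs_def] cover_cutoff_deriv_def[abs_def]
  by (rule smoothstep_chain[OF has_derivative_sum[OF bump_has_derivative]])

lemma continuous_cover_cutoff_deriv:
  fixes Q :: "'b::real_inner set"
  shows "continuous_on UNIV (\<lambda>z. cover_cutoff_deriv Q \<rho> z v)"
proof -
  have bump_cont: "continuous_on UNIV (bump q r)" for q :: 'b and r
    using bump_has_derivative by (meson continuous_at_imp_continuous_on has_derivative_continuous)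
  have "continuous_on UNIV (\<lambda>z. \<Sum>q\<in>Q. bump q (\<rho> q) z)"
    by (rule continuous_on_sum) (rule bump_cont)
  then show ?thesis
    unfolding cover_cutoff_deriv_def
    by (rule continuous_on_mult[OF continuous_on_sum[OF continuous_bump_deriv]
          continuous_on_smoothstep'])
qed

text \<open>On a covering ball the sum of bumps is \<open>\<ge> 1\<close>, where the smooth step is flat.\<close>
lemma cover_cutoff_on_cover:
  assumes "finite Q" "\<And>q. q \<in> Q \<Longrightarrow> \<rho> q > 0" "q \<in> Q" "z \<in> cball q (\<rho> q)"
  shows "cover_cutoff Q \<rho> z = 1" "cover_cutoff_deriv Q \<rho> z v = 0"
proof -
  have "bump q (\<rho> q) z = 1" using assms by (intro bump_eq_1) auto
  moreover have "bump q (\<rho> q) z \<le> (\<Sum>q\<in>Q. bump q (\<rho> q) z)"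
    using assms(1,3) by (intro member_le_sum) (auto simp: bump_def smoothstep_nonneg)
  ultimately have "1 \<le> (\<Sum>q\<in>Q. bump q (\<rho> q) z)" by simp
  then show "cover_cutoff Q \<rho> z = 1" "cover_cutoff_deriv Q \<rho> z v = 0"
    by (simp_all add: cover_cutoff_def cover_cutoff_deriv_def smoothstep_ge_1 smoothstep'_ge_1)
qed

lemma cover_cutoff_support:
  assumes "\<And>q. q \<in> Q \<Longrightarrow> \<rho> q > 0" "cover_cutoff Q \<rho> z \<noteq> 0"
  obtains q where "q \<in> Q" "z \<in> ball q (2 * \<rho> q)"
proof -
  have "\<not> (\<Sum>q\<in>Q. bump q (\<rho> q) z) \<le> 0"
    using assms(2) smoothstep_le_0 unfolding cover_cutoff_def by metis
  then obtain q where q: "q \<in> Q" "bump q (\<rho> q) z \<noteq> 0"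
    by (metis (mono_tags, lifting) order_refl sum.neutral)
  show ?thesis by (rule that[OF q(1) bump_nonzero_imp_ball[OF assms(1)[OF q(1)] q(2)]])
qed

text \<open>If \<open>Z\<close> is closed near each point of the compact set \<open>K \<subseteq> Z\<close>, there is a
  \<open>C\<^sup>1\<close> function which is \<open>1\<close> with vanishing derivative on \<open>K\<close> and whose support in \<open>Z\<close> lies in
  a compact subset of \<open>Z\<close>: take the cover cut-off of a finite cover of \<open>K\<close> by balls whose doubles
  meet \<open>Z\<close> in closed sets.\<close>
lemma C1_cutoff:
  fixes K Z :: "'b::euclidean_space set"
  assumes K: "compact K" "K \<subseteq> Z" and loc: "\<And>q. q \<in> K \<Longrightarrow> \<exists>r>0. closed (Z \<inter> cball q r)"
  obtains \<theta> :: "'b \<Rightarrow> real" and D\<theta> and C where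
    "\<And>z. (\<theta> has_derivative D\<theta> z) (at z)" "\<And>v. continuous_on UNIV (\<lambda>z. D\<theta> z v)"
    "\<And>z. z \<in> K \<Longrightarrow> \<theta> z = 1" "\<And>z v. z \<in> K \<Longrightarrow> D\<theta> z v = 0"
    "compact C" "C \<subseteq> Z" "{z \<in> Z. \<theta> z \<noteq> 0} \<subseteq> C"
proof -
  obtain r where r: "\<And>q. q \<in> K \<Longrightarrow> r q > 0 \<and> closed (Z \<inter> cball q (r q))"
    using loc by metis
  define \<rho> where "\<rho> q = r q / 2" for q
  have \<rho>: "\<rho> q > 0" if "q \<in> K" for q using r[OF that] by (simp add: \<rho>_def)
  have "K \<subseteq> (\<Union>q\<in>K. ball q (\<rho> q))" using \<rho> by force
  then obtain Q where Q: "Q \<subseteq> K" "finite Q" "K \<subseteq> (\<Union>q\<in>Q. ball q (\<rho> q))"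
    using compactE_image[OF K(1), of K "\<lambda>q. ball q (\<rho> q)"] by blast
  have \<rho>Q: "\<rho> q > 0" if "q \<in> Q" for q using \<rho> Q(1) that by blast
  define C where "C = (\<Union>q\<in>Q. Z \<inter> cball q (r q))"
  have on_K: "cover_cutoff Q \<rho> z = 1" "cover_cutoff_deriv Q \<rho> z v = 0" if zK: "z \<in> K" for z v
  proof -
    obtain q where "q \<in> Q" "z \<in> ball q (\<rho> q)" using Q(3) zK by blast
    then show "cover_cutoff Q \<rho> z = 1" "cover_cutoff_deriv Q \<rho> z v = 0"
      using cover_cutoff_on_cover[OF Q(2) \<rho>Q] by (simp_all add: less_imp_le)
  qed
  have supp: "{z \<in> Z. cover_cutoff Q \<rho> z \<noteq> 0} \<subseteq> C"
  proof
    fix z assume "z \<in> {z \<in> Z. cover_cutoff Q \<rho> z \<noteq> 0}"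
    then have z: "z \<in> Z" "cover_cutoff Q \<rho> z \<noteq> 0" by auto
    obtain q where "q \<in> Q" "z \<in> ball q (2 * \<rho> q)" by (rule cover_cutoff_support[OF \<rho>Q z(2)])
    then have "z \<in> Z \<inter> cball q (r q)" using z(1) by (simp add: \<rho>_def less_imp_le)
    then show "z \<in> C" using \<open>q \<in> Q\<close> unfolding C_def by blast
  qed
  have "compact (Z \<inter> cball q (r q))" if "q \<in> Q" for q
  proof -
    have "closed (Z \<inter> cball q (r q))" using r[of q] Q(1) that by auto
    moreover have "bounded (Z \<inter> cball q (r q))" by (simp add: bounded_Int)
    ultimately show ?thesis by (simp add: compact_eq_bounded_closed)
  qed
  then have compactC: "compact C" unfolding C_def using Q(2) by (intro compact_UN) auto
  have CZ: "C \<subseteq> Z" unfolding C_def by blast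
  show ?thesis
    by (rule that[OF cover_cutoff_has_derivative continuous_cover_cutoff_deriv on_K compactC CZ supp])
qed

section \<open>The vertical test field on \<open>N \<times> \<real>\<^sup>s\<close>\<close>

lemma tangent_space_product:
  fixes N :: "'a::euclidean_space set"
  assumes "w \<in> tangent_space (N \<times> (UNIV::'b::euclidean_space set)) z"
  shows "fst w \<in> tangent_space N (fst z)"
proof -
  obtain \<gamma> where g: "\<And>t. \<gamma> t \<in> N \<times> (UNIV::'b set)" "\<gamma> 0 = z"
    and gd: "(\<gamma> has_vector_derivative w) (at 0)"
    using assms unfolding tangent_space_def by blast
  have "((\<lambda>t. fst (\<gamma> t)) has_vector_derivative fst w) (at 0)"
    using has_derivative_fst[OF gd[unfolded has_vector_derivative_def]]
    unfolding has_vector_derivative_def by simp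
  moreover have "\<And>t. fst (\<gamma> t) \<in> N" using g(1) by (simp add: mem_Times_iff)
  ultimately show ?thesis
    unfolding tangent_space_def using g(2) by (intro CollectI exI[of _ "\<lambda>t. fst (\<gamma> t)"]) auto
qed

text \<open>Vertical vectors are tangent to \<open>N \<times> \<real>\<^sup>s\<close>: the straight vertical line stays inside.\<close>
lemma vertical_tangent:
  fixes N :: "'a::euclidean_space set"
  assumes "z \<in> N \<times> (UNIV::'b::euclidean_space set)"
  shows "((0::'a), y) \<in> tangent_space (N \<times> (UNIV::'b set)) z"
  unfolding tangent_space_def
proof (intro CollectI exI[of _ "\<lambda>t. z + t *\<^sub>R ((0::'a), y)"] conjI allI)
  show "z + t *\<^sub>R (0, y) \<in> N \<times> UNIV" for t using assms by (auto simp: mem_Times_iff)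
  show "((\<lambda>t. z + t *\<^sub>R ((0::'a), y)) has_vector_derivative (0, y)) (at 0)"
    by (auto intro!: derivative_eq_intros)
qed (simp add: zero_prod_def)

lemma closed_product_cball:
  fixes N :: "'a::euclidean_space set" and q :: "'a \<times> 'b::euclidean_space"
  assumes "closed (N \<inter> cball (fst q) r)"
  shows "closed ((N \<times> UNIV) \<inter> cball q r)"
proof -
  have "(N \<times> UNIV) \<inter> cball q r = ((N \<inter> cball (fst q) r) \<times> UNIV) \<inter> cball q r"
    using dist_fst_le[of q] by (auto simp: mem_Times_iff) (meson order_trans)
  moreover have "closed ((N \<inter> cball (fst q) r) \<times> (UNIV::'b set))"
    using assms closed_Times closed_UNIV by blast
  ultimately show ?thesis by (metis closed_Int closed_cball)
qed

lemma vertical_test_field: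
  fixes N :: "'a::euclidean_space set" and K :: "('a \<times> 'b::euclidean_space) set"
  assumes K: "compact K" "K \<subseteq> N \<times> UNIV"
    and loc: "\<And>p. p \<in> N \<Longrightarrow> \<exists>r>0. closed (N \<inter> cball p r)"
  obtains X DX where "tangent_test_field (N \<times> UNIV) X DX"
    "\<And>z v. z \<in> K \<Longrightarrow> blinfun_apply (DX z) v = (0, snd v)"
proof -
  have loc_Z: "\<exists>r>0. closed ((N \<times> UNIV) \<inter> cball q r)" if "q \<in> K" for q
  proof -
    have "fst q \<in> N" using that K(2) by (auto simp: mem_Times_iff)
    then obtain r where "r > 0" "closed (N \<inter> cball (fst q) r)" using loc by blast
    then show ?thesis using closed_product_cball by blast
  qed
  obtain \<theta> :: "'a \<times> 'b \<Rightarrow> real" and D\<theta> C where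
    d\<theta>: "\<And>z. (\<theta> has_derivative D\<theta> z) (at z)" and cD\<theta>: "\<And>v. continuous_on UNIV (\<lambda>z. D\<theta> z v)"
    and on_K: "\<And>z. z \<in> K \<Longrightarrow> \<theta> z = 1" "\<And>z v. z \<in> K \<Longrightarrow> D\<theta> z v = 0"
    and C: "compact C" "C \<subseteq> N \<times> UNIV" "{z \<in> N \<times> UNIV. \<theta> z \<noteq> 0} \<subseteq> C"
    using C1_cutoff[OF K loc_Z] by blast
  define X where "X z = \<theta> z *\<^sub>R ((0::'a), snd z)" for z
  define L where "L z v = \<theta> z *\<^sub>R ((0::'a), snd v) + D\<theta> z v *\<^sub>R ((0::'a), snd z)" for z v
  define DX where "DX z = Blinfun (L z)" for z
  have dX: "(X has_derivative L z) (at z)" for z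
  proof -
    have "((\<lambda>z. ((0::'a), snd z)) has_derivative (\<lambda>v. (0, snd v))) (at z)"
      by (auto intro!: derivative_eq_intros)
    from has_derivative_scaleR[OF d\<theta> this] show ?thesis
      unfolding X_def[abs_def] L_def by (simp add: algebra_simps)
  qed
  have DX_apply: "blinfun_apply (DX z) = L z" for z
    unfolding DX_def using dX has_derivative_bounded_linear bounded_linear_Blinfun_apply by blast
  have c\<theta>: "continuous_on UNIV \<theta>"
    using d\<theta> by (meson continuous_at_imp_continuous_on has_derivative_continuous)
  have cDX: "continuous_on UNIV DX"
    by (intro continuous_on_blinfun_componentwise)
       (simp add: DX_apply L_def, intro continuous_intros c\<theta> cD\<theta>)
  have tangent: "X z \<in> tangent_space (N \<times> UNIV) z" if "z \<in> N \<times> UNIV" for z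
    unfolding X_def using vertical_tangent[OF that] by simp
  have "{z \<in> N \<times> UNIV. X z \<noteq> 0} \<subseteq> C" using C(3) by (auto simp: X_def zero_prod_def)
  then have supp: "closure {z \<in> N \<times> UNIV. X z \<noteq> 0} \<subseteq> C"
    and "bounded {z \<in> N \<times> UNIV. X z \<noteq> 0}"
    using closure_minimal compact_imp_closed[OF C(1)] bounded_subset compact_imp_bounded[OF C(1)]
    by blast+
  then have "compact (closure {z \<in> N \<times> UNIV. X z \<noteq> 0})" by simp
  with dX DX_apply cDX tangent supp C(2) have "tangent_test_field (N \<times> UNIV) X DX"
    unfolding tangent_test_field_def by auto
  moreover have "blinfun_apply (DX z) v = (0, snd v)" if "z \<in> K" for z v
    using on_K that by (simp add: DX_apply L_def)
  ultimately show ?thesis using that by blast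
qed

section \<open>Vertical traces of planes\<close>

definition vertical_trace :: "('a::euclidean_space \<times> 'b::euclidean_space) \<Rightarrow>\<^sub>L ('a \<times> 'b) \<Rightarrow> real" where
  "vertical_trace P = (\<Sum>v\<in>Basis. P (0, v) \<bullet> (0, v))"

lemma sum_Basis_prod:
  fixes f :: "('a::euclidean_space \<times> 'b::euclidean_space) \<Rightarrow> real"
  shows "sum f Basis = (\<Sum>u\<in>Basis. f (u, 0)) + (\<Sum>v\<in>Basis. f (0, v))"
proof -
  have "inj_on (\<lambda>u. (u::'a, 0::'b)) Basis" "inj_on (\<lambda>v. (0::'a, v::'b)) Basis"
    by (auto intro!: inj_onI)
  then show ?thesis
    unfolding Basis_prod_def by (subst sum.union_disjoint) (auto simp: Basis_prod_def sum.reindex)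
qed

lemma div_plane_vertical_projection:
  assumes "\<And>v. blinfun_apply DX v = (0, snd v)"
  shows "div_plane P DX = vertical_trace P"
proof -
  have "div_plane P DX = (\<Sum>b\<in>Basis. P b \<bullet> (0, snd b))"
    unfolding div_plane_def using assms by simp
  also have "\<dots> = vertical_trace P"
    unfolding vertical_trace_def by (simp add: sum_Basis_prod flip: zero_prod_def)
  finally show ?thesis .
qed

lemma orthogonal_projection_facts:
  fixes P :: "'b::euclidean_space \<Rightarrow>\<^sub>L 'b"
  assumes S: "subspace S" and proj: "\<forall>v. P v \<in> S \<and> (\<forall>w\<in>S. (v - P v) \<bullet> w = 0)"
  shows "\<And>w. w \<in> S \<Longrightarrow> P w = w" "\<And>v. P v \<bullet> v = (norm (P v))^2" "\<And>v. norm (P v) \<le> norm v"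
proof -
  fix w assume w: "w \<in> S"
  then have "w - P w \<in> S" using proj S by (simp add: subspace_diff)
  then have "(w - P w) \<bullet> (w - P w) = 0" using proj by blast
  then show "P w = w" by simp
next
  fix v
  have "(v - P v) \<bullet> P v = 0" using proj by blast
  then have "P v \<bullet> v = P v \<bullet> P v" by (simp add: inner_diff_left inner_diff_right inner_commute)
  then show "P v \<bullet> v = (norm (P v))^2" by (simp add: power2_norm_eq_inner)
  then have "(norm (P v))^2 \<le> norm (P v) * norm v"
    by (metis norm_cauchy_schwarz)
  then show "norm (P v) \<le> norm v"
    by (metis mult_le_cancel_left_pos norm_ge_zero order.strict_iff_order power2_eq_square)
qed

text \<open>A subspace of \<open>'a \<times> 'b\<close> whose horizontal projection lies in a subspace of smaller
  dimension contains a non-zero vertical vector (otherwise \<open>fst\<close> would be injective on it).\<close>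
lemma subspace_contains_vertical:
  fixes S :: "('a::euclidean_space \<times> 'b::euclidean_space) set"
  assumes "subspace S" "subspace T" "fst ` S \<subseteq> T" "dim T < dim S"
  shows "\<exists>w\<in>S. w \<noteq> 0 \<and> fst w = 0"
proof (rule ccontr)
  assume "\<not> ?thesis"
  then have "inj_on fst S"
    using assms(1) by (intro inj_onI) (metis diff_eq_eq subspace_diff fst_diff add_0)
  then have "dim (fst ` S) = dim S"
    using dim_image_eq linear_fst span_eq_iff assms(1) by metis
  moreover have "dim (fst ` S) \<le> dim T" using dim_subset[OF assms(3)] .
  ultimately show False using assms(4) by simp
qed

lemma vertical_trace_bounds:
  fixes P :: "('a::euclidean_space \<times> 'b::euclidean_space) \<Rightarrow>\<^sub>L ('a \<times> 'b)"
  assumes S: "subspace S" and proj: "\<forall>v. P v \<in> S \<and> (\<forall>w\<in>S. (v - P v) \<bullet> w = 0)"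
    and w: "w \<in> S" "w \<noteq> 0" "fst w = 0"
  shows "0 < vertical_trace P" "vertical_trace P \<le> DIM('b)"
proof -
  note pr = orthogonal_projection_facts[OF S proj]
  have le1: "P (0, v) \<bullet> (0, v) \<le> 1" if "v \<in> Basis" for v
  proof -
    have "norm (P (0, v)) \<le> norm ((0::'a), v)" by (rule pr(3))
    then have "norm (P (0, v)) \<le> 1" using that by (simp add: norm_Pair)
    then show ?thesis unfolding pr(2) by (simp add: power_le_one)
  qed
  show "vertical_trace P \<le> DIM('b)"
    unfolding vertical_trace_def using sum_mono[OF le1, of Basis] by simp
  text \<open>If every term vanished, \<open>P\<close> would kill all vertical vectors, in particular \<open>w = P w\<close>.\<close>
  show "0 < vertical_trace P"
  proof (rule ccontr)
    assume "\<not> 0 < vertical_trace P"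
    moreover have "0 \<le> vertical_trace P" unfolding vertical_trace_def pr(2) by (simp add: sum_nonneg)
    ultimately have "vertical_trace P = 0" by linarith
    then have "\<forall>v\<in>Basis. P (0, v) \<bullet> (0, v) = 0"
      unfolding vertical_trace_def pr(2) by (simp add: sum_nonneg_eq_0_iff)
    then have zero: "P (0, v) = 0" if "v \<in> Basis" for v using that unfolding pr(2) by simp
    have "w = (\<Sum>v\<in>Basis. (snd w \<bullet> v) *\<^sub>R ((0::'a), v))"
      using w(3) by (intro prod_eqI) (simp_all add: fst_sum snd_sum euclidean_representation)
    then have "P w = (\<Sum>v\<in>Basis. (snd w \<bullet> v) *\<^sub>R P (0, v))"
      by (metis (no_types, lifting) blinfun.scaleR_right blinfun.sum_right sum.cong)
    then have "P w = 0" using zero by simp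
    then show False using pr(1)[OF w(1)] w(2) by simp
  qed
qed

lemma plane_vertical_trace_bounds:
  fixes N :: "'a::euclidean_space set" and P :: "('a \<times> 'b::euclidean_space) \<Rightarrow>\<^sub>L ('a \<times> 'b)"
  assumes "smooth_submanifold n N" "fst z \<in> N"
    and plane: "is_plane (N \<times> (UNIV::'b set)) (n + k) z P" and "1 \<le> k"
  shows "0 < vertical_trace P" "vertical_trace P \<le> DIM('b)"
proof -
  obtain T where T: "subspace T" "dim T \<le> n" "tangent_space N (fst z) \<subseteq> T"
    using submanifold_tangent_space_dim[OF assms(1,2)] by metis
  obtain S where S: "subspace S" "dim S = n + k" "S \<subseteq> tangent_space (N \<times> (UNIV::'b set)) z"
    and proj: "\<forall>v. P v \<in> S \<and> (\<forall>w\<in>S. (v - P v) \<bullet> w = 0)"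
    using plane unfolding is_plane_def by blast
  have "fst ` S \<subseteq> T" using S(3) T(3) tangent_space_product by blast
  then obtain w where "w \<in> S" "w \<noteq> 0" "fst w = 0"
    using subspace_contains_vertical[OF S(1) T(1)] S(2) T(2) assms(4) by auto
  from vertical_trace_bounds[OF S(1) proj this]
  show "0 < vertical_trace P" "vertical_trace P \<le> DIM('b)" by auto
qed

lemma finite_measure_zero_if_integral_positive_zero:
  fixes f :: "'x::topological_space \<Rightarrow> real"
  assumes "sets M = sets borel" "emeasure M (space M) < \<infinity>" "continuous_on UNIV f"
    and pos: "AE x in M. 0 < f x \<and> f x \<le> B" and int: "(\<integral>x. f x \<partial>M) = 0"
  shows "emeasure M (space M) = 0"
proof -
  have "f \<in> borel_measurable M"
    using measurable_cong_sets[OF assms(1) refl] borel_measurable_continuous_onI[OF assms(3)]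
    by blast
  moreover have "AE x in M. norm (f x) \<le> B" using pos by eventually_elim auto
  ultimately have "integrable M f"
    using assms(2) by (intro finite_measure.integrable_const_bound finite_measureI) auto
  moreover have "AE x in M. 0 \<le> f x" using pos by eventually_elim auto
  ultimately have "AE x in M. f x = 0" using integral_nonneg_eq_0_iff_AE int by blast
  with pos have "AE x in M. False" by eventually_elim auto
  then show ?thesis using ae_filter_eq_bot_iff eventually_False by blast
qed

theorem theorem7p6:
  fixes N :: "'a::euclidean_space set"
    and n :: nat
    and K :: "('a \<times> (real^'s::finite)) set"
    and k :: nat
    and V :: "(('a \<times> (real^'s)) \<times> (('a \<times> (real^'s)) \<Rightarrow>\<^sub>L ('a \<times> (real^'s)))) measure"
  assumes "smooth_submanifold n N"
    and "CARD('s) > 1"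
    and "compact K" and "K \<subseteq> N \<times> UNIV"
    and "1 \<le> k" and "k \<le> CARD('s) - 1"
    and "varifold (N \<times> UNIV) (n + k) K V"
    and "stationary (N \<times> UNIV) V"
  shows "emeasure V (space V) = 0"
proof -
  have sets: "sets V = sets borel" and finite: "emeasure V (space V) < \<infinity>"
    and planes: "AE xP in V. xP \<in> grassmann_bundle (N \<times> UNIV) (n + k) K"
    using assms(7) unfolding varifold_def by auto
  obtain X DX where test: "tangent_test_field (N \<times> UNIV) X DX"
    and vertical: "\<And>z v. z \<in> K \<Longrightarrow> blinfun_apply (DX z) v = (0, snd v)"
    using vertical_test_field[OF assms(3,4) submanifold_locally_closed[OF assms(1)]] by blast
  define f where "f xP = div_plane (snd xP) (DX (fst xP))" for xP
  have integral: "(\<integral>xP. f xP \<partial>V) = 0"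
    using assms(8) test unfolding stationary_def f_def by blast
  have "continuous_on UNIV DX" using test unfolding tangent_test_field_def by blast
  then have continuous: "continuous_on UNIV f"
    unfolding f_def div_plane_def
    by (intro continuous_intros continuous_on_compose2[of UNIV DX UNIV fst]) auto
  have positive: "AE xP in V. 0 < f xP \<and> f xP \<le> CARD('s)"
    using planes
  proof (rule AE_mp, intro AE_I2 impI)
    fix xP assume "xP \<in> grassmann_bundle (N \<times> UNIV) (n + k) K"
    then have K: "fst xP \<in> K" and plane: "is_plane (N \<times> UNIV) (n + k) (fst xP) (snd xP)"
      unfolding grassmann_bundle_def by auto
    have "f xP = vertical_trace (snd xP)"
      unfolding f_def using div_plane_vertical_projection vertical[OF K] by blast
    moreover have "fst (fst xP) \<in> N" using K assms(4) by auto
    ultimately show "0 < f xP \<and> f xP \<le> CARD('s)"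
      using plane_vertical_trace_bounds[OF assms(1) _ plane assms(5)] by simp
  qed
  show ?thesis
    by (rule finite_measure_zero_if_integral_positive_zero[OF sets finite continuous positive integral])
qed

end
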